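(* Let $\mathbf{HC}=(h_n)_{n\ge 0}$ be the infinite Hilbert curve direction word defined in the context. Let $M$ be the deterministic finite automaton with output with state set $\{0,1,\dots,7\}$, input alphabet $\{0,1,2,3\}$, initial state $0$, and transition function $\delta$ and output function $\tau$ given by the following table (row $q$ lists $\delta(q,0),\delta(q,1),\delta(q,2),\delta(q,3)$ and then $\tau(q)$): $0: 0,1,2,3;\ \mathtt{U}$; $1: 1,0,4,5;\ \mathtt{R}$; $2: 1,0,4,6;\ \mathtt{D}$; $3: 7,6,5,0;\ \mathtt{R}$; $4: 0,1,2,7;\ \mathtt{L}$; $5: 6,7,3,1;\ \mathtt{U}$; $6: 6,7,3,2;\ \mathtt{L}$; $7: 7,6,5,4;\ \mathtt{D}$. Then for every $n\ge 0$, $h_n=\tau(\delta(0,(n)_4))$, where $(n)_4$ is the canonical base-$4$ representation of $n$ (most significant digit first, $(0)_4$ the empty word) and $\delta$ is extended to words in the usual way. In particular $\mathbf{HC}$ is $4$-automatic.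
   Context: Directions are letters of the alphabet $\{\mathtt{U},\mathtt{D},\mathtt{R},\mathtt{L}\}$ (up, down, right, left). Let $t_D$ be the letter-to-letter morphism with $t_D(\mathtt{U})=\mathtt{R}$, $t_D(\mathtt{D})=\mathtt{L}$, $t_D(\mathtt{R})=\mathtt{U}$, $t_D(\mathtt{L})=\mathtt{D}$ (flip about the main diagonal), and $t_H$ the morphism with $t_H(\mathtt{U})=\mathtt{D}$, $t_H(\mathtt{D})=\mathtt{U}$, $t_H(\mathtt{R})=\mathtt{L}$, $t_H(\mathtt{L})=\mathtt{R}$ ($180^\circ$ rotation). Define words $A_n$ by $A_0=\epsilon$ (empty word) and, for $n\ge 0$, $A_{2n+1}=A_{2n}\,\mathtt{U}\,t_D(A_{2n})\,\mathtt{R}\,t_D(A_{2n})\,\mathtt{D}\,t_H(A_{2n})$, $A_{2n+2}=A_{2n+1}\,\mathtt{R}\,t_D(A_{2n+1})\,\mathtt{U}\,t_D(A_{2n+1})\,\mathtt{L}\,t_H(A_{2n+1})$. Each $A_n$ is a prefix of $A_{n+1}$, and $\mathbf{HC}=h_0h_1h_2\cdots$ is the unique infinite word having every $A_n$ as a prefix (so $\mathbf{HC}=\mathtt{URDRRULURULLD}\cdots$). *)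

theory Defs
  imports Main
begin

datatype dir = U | D | R | L

fun tD :: "dir \<Rightarrow> dir" where
  "tD U = R" | "tD D = L" | "tD R = U" | "tD L = D"

fun tH :: "dir \<Rightarrow> dir" where
  "tH U = D" | "tH D = U" | "tH R = L" | "tH L = R"

fun A :: "nat \<Rightarrow> dir list" where
  "A 0 = []"
| "A (Suc n) =
     (if even n
      then A n @ [U] @ map tD (A n) @ [R] @ map tD (A n) @ [D] @ map tH (A n)
      else A n @ [R] @ map tD (A n) @ [U] @ map tD (A n) @ [L] @ map tH (A n))"

definition HC :: "nat \<Rightarrow> dir" where
  "HC = (THE w. \<forall>n. \<forall>i < length (A n). w i = A n ! i)"

fun base4 :: "nat \<Rightarrow> nat list" where
  "base4 n = (if n = 0 then [] else base4 (n div 4) @ [n mod 4])"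

definition delta_table :: "nat list list" where
  "delta_table = [[0,1,2,3],[1,0,4,5],[1,0,4,6],[7,6,5,0],
                  [0,1,2,7],[6,7,3,1],[6,7,3,2],[7,6,5,4]]"

definition delta :: "nat \<Rightarrow> nat \<Rightarrow> nat" where
  "delta q a = delta_table ! q ! a"

definition delta_star :: "nat \<Rightarrow> nat list \<Rightarrow> nat" where
  "delta_star q w = foldl delta q w"

definition tau :: "nat \<Rightarrow> dir" where
  "tau q = [U, R, D, R, L, U, L, D] ! q"

end

theory Submission
  imports Defs
begin

text \<open>
  Every state q of the automaton stands for a block of length 4^m: the word A m transformed
  by a symmetry of the square (state_symmetry q), followed by one connecting letter
  (state_link q m) that depends only on q and the parity of m. The defining recursion of A splits the block of q at level m + 1
  into the four blocks of the successor states delta q 0, ..., delta q 3 at level m, so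
  reading the base-4 digits of n (padded with leading zeros, which fix state 0) locates
  position n inside the block of state 0; at level 0 the block of q is the single letter tau q.
  The block of state 0 at level m is A m followed by one letter, hence its first 4^m - 1
  letters are those of HC.
\<close>

declare base4.simps [simp del]

lemma tD_tD [simp]: "tD (tD x) = x"
  by (cases x) auto

lemma tH_tH [simp]: "tH (tH x) = x"
  by (cases x) auto

lemma tH_tD [simp]: "tH (tD x) = tD (tH x)"
  by (cases x) auto

lemma length_A: "length (A m) = 4 ^ m - 1"
proof (induction m)
  case (Suc m)
  have "(1::nat) \<le> 4 ^ m" by simp
  with Suc show ?case by auto
qed simp

lemma less_length_A_Suc: "i < length (A (Suc i))"
proof -
  have "i < 4 ^ i" by (induction i) auto
  also have "4 ^ i + 1 \<le> (4::nat) ^ Suc i" by simp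
  finally show ?thesis by (simp add: length_A)
qed

lemma HC_eqI:
  assumes "\<And>n i. i < length (A n) \<Longrightarrow> w i = A n ! i"
  shows "HC = w"
  unfolding HC_def
proof (rule the_equality)
  show "\<forall>n. \<forall>i < length (A n). w i = A n ! i" using assms by blast
next
  fix w' assume "\<forall>n. \<forall>i < length (A n). w' i = A n ! i"
  then show "w' = w" using assms less_length_A_Suc by (metis ext)
qed

definition state_symmetry :: "nat \<Rightarrow> dir \<Rightarrow> dir" where
  "state_symmetry q = [id, tD, tD, tH, id, tD \<circ> tH, tD \<circ> tH, tH] ! q"

definition state_link :: "nat \<Rightarrow> nat \<Rightarrow> dir" where
  "state_link q m = (if even m then [U, R, D, R, L, U, L, D] else [R, U, L, U, D, R, D, L]) ! q"

definition block :: "nat \<Rightarrow> nat \<Rightarrow> dir list" where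
  "block q m = map (state_symmetry q) (A m) @ [state_link q m]"

lemma length_block: "length (block q m) = 4 ^ m"
proof -
  have "(1::nat) \<le> 4 ^ m" by simp
  then show ?thesis by (simp add: block_def length_A)
qed

lemma block_0_prefix: "i < length (A m) \<Longrightarrow> block 0 m ! i = A m ! i"
  by (simp add: block_def state_symmetry_def nth_append)

lemma tau_eq_block_0: "q < 8 \<Longrightarrow> tau q = block q 0 ! 0"
  by (auto simp: block_def state_link_def tau_def less_Suc_eq numeral_eq_Suc)

lemma delta_less_8: "q < 8 \<Longrightarrow> a < 4 \<Longrightarrow> delta q a < 8"
  by (auto simp: delta_def delta_table_def less_Suc_eq numeral_eq_Suc)

lemma block_Suc:
  assumes "q < 8"
  shows "block q (Suc m) =
    block (delta q 0) m @ block (delta q 1) m @ block (delta q 2) m @ block (delta q 3) m"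
proof -
  have "q \<in> {0, 1, 2, 3, 4, 5, 6, 7}" using assms by auto
  then show ?thesis
    by (cases "even m")
       (auto simp: block_def state_symmetry_def state_link_def delta_def delta_table_def)
qed

fun val4 :: "nat list \<Rightarrow> nat" where
  "val4 [] = 0"
| "val4 (d # w) = d * 4 ^ length w + val4 w"

lemma val4_less: "\<forall>d\<in>set w. d < 4 \<Longrightarrow> val4 w < 4 ^ length w"
proof (induction w)
  case (Cons d w)
  then have "d \<le> 3" "val4 w + 1 \<le> 4 ^ length w" by auto
  then have "d * 4 ^ length w + val4 w < 3 * 4 ^ length w + 4 ^ length w"
    using mult_le_mono1[of d 3 "4 ^ length w"] by linarith
  then show ?case by simp
qed simp

lemma val4_snoc: "val4 (w @ [d]) = 4 * val4 w + d"
  by (induction w) (auto simp: algebra_simps)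

lemma val4_replicate_0: "val4 (replicate k 0 @ w) = val4 w"
  by (induction k) auto

lemma tau_delta_star_eq_block_nth:
  assumes "\<forall>d\<in>set w. d < 4" and "q < 8"
  shows "tau (delta_star q w) = block q (length w) ! val4 w"
  using assms
proof (induction w arbitrary: q)
  case Nil
  then show ?case by (simp add: delta_star_def tau_eq_block_0)
next
  case (Cons a w)
  let ?m = "length w"
  have "a < 4" and "val4 w < 4 ^ ?m" using Cons.prems val4_less by auto
  then have "block q (Suc ?m) ! (a * 4 ^ ?m + val4 w) = block (delta q a) ?m ! val4 w"
    by (auto simp: block_Suc[OF \<open>q < 8\<close>] nth_append length_block less_Suc_eq numeral_eq_Suc)
  moreover have "tau (delta_star (delta q a) w) = block (delta q a) ?m ! val4 w"
    using Cons delta_less_8 \<open>a < 4\<close> by auto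
  ultimately show ?case by (simp add: delta_star_def)
qed

lemma val4_base4: "val4 (base4 n) = n"
  by (induction n rule: base4.induct) (subst base4.simps, auto simp: val4_snoc)

lemma base4_digit_less: "d \<in> set (base4 n) \<Longrightarrow> d < 4"
  by (induction n rule: base4.induct) (subst (asm) base4.simps, auto split: if_splits)

lemma length_base4_le: "n < 4 ^ m \<Longrightarrow> length (base4 n) \<le> m"
proof (induction m arbitrary: n)
  case (Suc m)
  then have "length (base4 (n div 4)) \<le> m" by auto
  then show ?case by (subst base4.simps) auto
qed (subst base4.simps, auto)

lemma delta_star_0_replicate_0: "delta_star 0 (replicate k 0 @ w) = delta_star 0 w"
proof -
  have "foldl delta 0 (replicate k 0) = 0"
    by (induction k) (auto simp: delta_def delta_table_def)
  then show ?thesis by (simp add: delta_star_def)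
qed

lemma A_nth_eq_tau_delta_star:
  assumes "i < length (A m)"
  shows "A m ! i = tau (delta_star 0 (base4 i))"
proof -
  define w where "w = replicate (m - length (base4 i)) 0 @ base4 i"
  have "length w = m"
    using assms length_base4_le[of i m] by (simp add: w_def length_A)
  have "tau (delta_star 0 (base4 i)) = tau (delta_star 0 w)"
    by (simp add: w_def delta_star_0_replicate_0)
  also have "\<dots> = block 0 m ! val4 w"
    using tau_delta_star_eq_block_nth[of w 0] base4_digit_less \<open>length w = m\<close>
    by (fastforce simp: w_def)
  also have "\<dots> = A m ! i"
    using assms by (simp add: w_def val4_replicate_0 val4_base4 block_0_prefix)
  finally show ?thesis by simp
qed

theorem mainTheorem1:
  shows "\<forall>n::nat. HC n = tau (delta_star 0 (base4 n))"
proof -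
  have "HC = (\<lambda>n. tau (delta_star 0 (base4 n)))"
    by (rule HC_eqI) (simp add: A_nth_eq_tau_delta_star)
  then show ?thesis by metis
qed

end
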